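(* Let $(\alpha^{(n)},\omega^{(n)},\beta^{(n)})$ be a sequence of feasible endpoint constraints converging componentwise to a feasible constraint $(\alpha,\omega,\beta)$ with $0<\beta<\infty$. Then $$\liminf_{n\to\infty}\mathcal{J}(\alpha^{(n)},\omega^{(n)},\beta^{(n)})\ge\mathcal{J}(\alpha,\omega,\beta).$$
   Context: Fix $I\ge0$. $S_I=\{\gamma\in\mathbb{R}^{I+2}:\gamma_j\ge0,\sum\gamma_j=1\}$. An endpoint constraint is $(\alpha,\omega,\beta)$ with $\alpha,\omega\in S_I$ (components $\alpha_0,\dots,\alpha_{I+1}$ with $\alpha_0>0$, and $\omega_0,\dots,\omega_I,\omega_{I+}$), $\beta>0$; it is feasible iff $\sum_{j\le i}\alpha_j\ge\sum_{j\le i}\omega_j$ ($i=0,\dots,I$) and $\sum_{i=0}^Ii\omega_i+(I+1)\omega_{I+}\le\sum_{k=0}^{I+1}k\alpha_k+\beta$. With $\mathcal{K}=\{k:\alpha_k>0\}$, $\mathcal{J}(\alpha,\omega,\beta)$ is the minimum of $\sum_{k\in\mathcal{K}}\alpha_kD(\pi_{(k)}\|\mathcal{P}(\beta))$ over tuples $(\pi_{(k)})_{k\in\mathcal{K}}$ of probability distributions on the nonnegative integers satisfying $\sum_{k\in\mathcal{K}}\alpha_k\sum_jj\pi_{k,j}=\beta$ and $\omega_i=\sum_{k\le i,k\in\mathcal{K}}\alpha_k\pi_{k,i-k}$ for $0\le i\le I$, if $(\alpha,\omega,\beta)$ is feasible, and $\infty$ otherwise. $\mathcal{P}(\beta)$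 is the Poisson distribution with mean $\beta$ and $D$ is relative entropy. *)

theory Defs
  imports "HOL-Analysis.Analysis"
begin

text \<open>Vectors in R^{I+2} are represented as functions nat => real; only the
  components with index 0..I+1 matter. For omega, index I+1 is omega_{I+}.\<close>

definition simplexI :: "nat \<Rightarrow> (nat \<Rightarrow> real) \<Rightarrow> bool" where
  "simplexI I g \<longleftrightarrow> (\<forall>j\<le>I+1. g j \<ge> 0) \<and> (\<Sum>j\<le>I+1. g j) = 1"

definition feasible :: "nat \<Rightarrow> (nat \<Rightarrow> real) \<Rightarrow> (nat \<Rightarrow> real) \<Rightarrow> real \<Rightarrow> bool" where
  "feasible I \<alpha> \<omega> \<beta> \<longleftrightarrow>
     simplexI I \<alpha> \<and> simplexI I \<omega> \<and> \<alpha> 0 > 0 \<and> \<beta> > 0 \<and>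
     (\<forall>i\<le>I. (\<Sum>j\<le>i. \<alpha> j) \<ge> (\<Sum>j\<le>i. \<omega> j)) \<and>
     (\<Sum>i\<le>I. real i * \<omega> i) + real (I+1) * \<omega> (I+1)
        \<le> (\<Sum>k\<le>I+1. real k * \<alpha> k) + \<beta>"

definition poisson :: "real \<Rightarrow> nat \<Rightarrow> real" where
  "poisson \<beta> j = exp (- \<beta>) * \<beta> ^ j / fact j"

definition prob_dist :: "(nat \<Rightarrow> real) \<Rightarrow> bool" where
  "prob_dist p \<longleftrightarrow> (\<forall>j. p j \<ge> 0) \<and> p sums 1"

text \<open>Relative entropy D(p || q) = sum_j p_j ln(p_j/q_j), with 0 ln 0 = 0;
  equal to infinity when the series does not converge (its negative part
  always converges, so divergence means divergence to +infinity).\<close>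
definition relent :: "(nat \<Rightarrow> real) \<Rightarrow> (nat \<Rightarrow> real) \<Rightarrow> ereal" where
  "relent p q = (let f = (\<lambda>j. if p j = 0 then 0 else p j * ln (p j / q j))
                 in if summable f then ereal (suminf f) else \<infinity>)"

definition Jfun :: "nat \<Rightarrow> (nat \<Rightarrow> real) \<Rightarrow> (nat \<Rightarrow> real) \<Rightarrow> real \<Rightarrow> ereal" where
  "Jfun I \<alpha> \<omega> \<beta> =
    (if feasible I \<alpha> \<omega> \<beta> then
       (let K = {k. k \<le> I+1 \<and> \<alpha> k > 0} in
        Inf { (\<Sum>k\<in>K. ereal (\<alpha> k) * relent (\<pi> k) (poisson \<beta>)) | \<pi> :: nat \<Rightarrow> nat \<Rightarrow> real.
              (\<forall>k\<in>K. prob_dist (\<pi> k) \<and> summable (\<lambda>j. real j * \<pi> k j)) \<and>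
              (\<Sum>k\<in>K. \<alpha> k * (\<Sum>j. real j * \<pi> k j)) = \<beta> \<and>
              (\<forall>i\<le>I. \<omega> i = (\<Sum>k\<in>{k\<in>K. k \<le> i}. \<alpha> k * \<pi> k (i - k))) })
     else \<infinity>)"

end

theory Submission
  imports Defs "HOL-Library.Diagonal_Subsequence" "HOL-Real_Asymp.Real_Asymp"
begin

text \<open>Suppose infinitely many of the values \<open>Jfun I (\<alpha>s n) (\<omega>s n) (\<beta>s n)\<close> are below \<open>L\<close>, and pick
  plans of cost below \<open>L\<close> for them. Plans take values in \<open>[0, 1]\<close>, so a diagonal argument makes
  them converge pointwise along a subsequence, and the limit plan is admissible for
  \<open>(\<alpha>, \<omega>, \<beta>)\<close>: the \<open>\<omega>\<close>-constraints are finite sums; the bound \<open>\<alpha>\<^sub>k m\<^sub>k \<le> \<beta>\<close> on the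
  means makes the plans tight, so no mass is lost; and the entropy bound makes \<open>j\<close> uniformly
  integrable (through \<open>p t j \<le> p ln(p/q) - p + q e\<^sup>t\<^sup>j\<close> and the exponential moments of Poisson
  laws), so the mean constraint survives. Writing relative entropy as a series of nonnegative
  terms makes it lower semicontinuous, so the limit plan costs at most \<open>L\<close>, and
  \<open>Jfun I \<alpha> \<omega> \<beta> \<le> L\<close>.\<close>

section \<open>Relative entropy as a series of nonnegative terms\<close>

definition relent_term :: "real \<Rightarrow> real \<Rightarrow> real" where
  "relent_term p q = (if p = 0 then 0 else p * ln (p / q))"

text \<open>Unlike \<open>relent_term\<close>, these terms are nonnegative; for probability vectors they still sum
  to \<open>D(p||q)\<close>.\<close>
definition relent_gap :: "real \<Rightarrow> real \<Rightarrow> real" where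
  "relent_gap p q = relent_term p q - p + q"

lemma relent_eq_relent_term:
  "relent p q = (if summable (\<lambda>j. relent_term (p j) (q j))
                 then ereal (\<Sum>j. relent_term (p j) (q j)) else \<infinity>)"
  unfolding relent_def relent_term_def Let_def by simp

lemma relent_term_eq_diff_ln:
  assumes "0 \<le> p" "0 < q"
  shows "relent_term p q = p * ln p - p * ln q"
  using assms by (cases "p = 0") (auto simp: relent_term_def ln_div algebra_simps)

lemma relent_gap_ge:
  assumes "0 \<le> p" "0 < q"
  shows "p * g \<le> relent_gap p q + q * (exp g - 1)"
proof (cases "p = 0")
  case True
  then show ?thesis using assms by (simp add: relent_gap_def relent_term_def ring_distribs)
next
  case False
  with assms have p: "0 < p" by simp
  have "ln (q * exp g / p) \<le> q * exp g / p - 1"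
    using p assms by (intro ln_le_minus_one) simp
  also have "ln (q * exp g / p) = ln q + g - ln p"
    using p assms by (simp add: ln_div ln_mult)
  finally have "p * (ln q + g - ln p) \<le> q * exp g - p"
    using p by (simp add: field_simps)
  then show ?thesis
    using assms by (simp add: relent_gap_def relent_term_eq_diff_ln algebra_simps)
qed

lemma relent_gap_nonneg: "0 \<le> p \<Longrightarrow> 0 < q \<Longrightarrow> 0 \<le> relent_gap p q"
  using relent_gap_ge[of p q 0] by simp

lemma continuous_on_x_ln_x: "continuous_on {0..} (\<lambda>x::real. x * ln x)"
  unfolding continuous_on_def
proof (intro ballI)
  fix x :: real assume "x \<in> {0..}"
  then consider "x = 0" | "0 < x" by fastforce
  then show "((\<lambda>x. x * ln x) \<longlongrightarrow> x * ln x) (at x within {0..})"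
  proof cases
    case 1
    have "((\<lambda>x::real. x * ln x) \<longlongrightarrow> 0) (at_right 0)" by real_asymp
    then show ?thesis using 1 by (simp add: at_within_Ici_at_right)
  next
    case 2
    then have "isCont (\<lambda>x::real. x * ln x) x" by (intro continuous_intros) auto
    then show ?thesis using continuous_at_imp_continuous_at_within continuous_within by blast
  qed
qed

lemma tendsto_relent_term:
  assumes "\<And>n. 0 \<le> p n" "p \<longlonglongrightarrow> a" "q \<longlonglongrightarrow> b" "0 < b"
  shows "(\<lambda>n. relent_term (p n) (q n)) \<longlonglongrightarrow> relent_term a b"
proof -
  have "0 \<le> a" by (rule LIMSEQ_le_const[OF assms(2)]) (use assms(1) in auto)
  have x_ln_x: "(\<lambda>n. p n * ln (p n)) \<longlonglongrightarrow> a * ln a"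
    using assms(1) \<open>0 \<le> a\<close>
    by (intro continuous_on_tendsto_compose[OF continuous_on_x_ln_x assms(2)]) auto
  have "(\<lambda>n. p n * ln (p n) - p n * ln (q n)) \<longlonglongrightarrow> a * ln a - a * ln b"
    using assms by (intro tendsto_diff[OF x_ln_x] tendsto_intros) auto
  moreover have "eventually (\<lambda>n. p n * ln (p n) - p n * ln (q n) = relent_term (p n) (q n)) sequentially"
    using order_tendstoD(1)[OF assms(3,4)]
    by eventually_elim (simp add: relent_term_eq_diff_ln assms(1))
  ultimately show ?thesis
    using assms \<open>0 \<le> a\<close> by (simp add: tendsto_cong relent_term_eq_diff_ln)
qed

lemma relent_term_sums_iff_relent_gap_sums:
  assumes "p sums 1" "q sums 1"
  shows "(\<lambda>j. relent_term (p j) (q j)) sums D \<longleftrightarrow> (\<lambda>j. relent_gap (p j) (q j)) sums D"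
proof
  assume "(\<lambda>j. relent_term (p j) (q j)) sums D"
  from sums_add[OF sums_diff[OF this assms(1)] assms(2)]
  show "(\<lambda>j. relent_gap (p j) (q j)) sums D" by (simp add: relent_gap_def)
next
  assume "(\<lambda>j. relent_gap (p j) (q j)) sums D"
  from sums_diff[OF sums_add[OF this assms(1)] assms(2)]
  show "(\<lambda>j. relent_term (p j) (q j)) sums D" by (simp add: relent_gap_def)
qed

lemma relent_eq_relent_gap:
  assumes "p sums 1" "q sums 1"
  shows "relent p q = (if summable (\<lambda>j. relent_gap (p j) (q j))
                       then ereal (\<Sum>j. relent_gap (p j) (q j)) else \<infinity>)"
  using relent_term_sums_iff_relent_gap_sums[OF assms]
  unfolding relent_eq_relent_term summable_def by (metis sums_unique)

section \<open>Poisson laws and distributions on the naturals\<close>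

lemma poisson_pos: "0 < b \<Longrightarrow> 0 < poisson b j"
  by (simp add: poisson_def)

lemma poisson_sums: "poisson b sums 1"
proof -
  have "(\<lambda>j. exp (-b) * (b ^ j /\<^sub>R fact j)) sums (exp (-b) * exp b)"
    by (intro sums_mult exp_converges)
  then show ?thesis by (simp add: poisson_def[abs_def] exp_minus field_simps)
qed

lemma tendsto_poisson: "b \<longlonglongrightarrow> c \<Longrightarrow> (\<lambda>n. poisson (b n) j) \<longlonglongrightarrow> poisson c j"
  unfolding poisson_def by (intro tendsto_intros) auto

lemma poisson_exp_moment_tail_uniform:
  fixes B t e :: real
  assumes "0 < e"
  shows "\<exists>M. \<forall>b N. 0 < b \<longrightarrow> b \<le> B \<longrightarrow> (\<Sum>j\<in>{M..<N}. poisson b j * exp (t * j)) \<le> e"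
proof -
  define x where "x = B * exp t"
  obtain M where M: "\<And>N. norm (\<Sum>j\<in>{M..<N}. inverse (fact j) * x ^ j) < e"
    using summable_exp[of x] assms unfolding summable_Cauchy by blast
  have "(\<Sum>j\<in>{M..<N}. poisson b j * exp (t * j)) \<le> e" if b: "0 < b" "b \<le> B" for b N
  proof -
    have "poisson b j * exp (t * j) \<le> inverse (fact j) * x ^ j" for j
    proof -
      have "poisson b j * exp (t * j) = exp (-b) * (b * exp t) ^ j / fact j"
        by (simp add: poisson_def power_mult_distrib exp_of_nat_mult[symmetric] mult.commute)
      also have "\<dots> \<le> (b * exp t) ^ j / fact j"
        using b by (intro divide_right_mono mult_left_le_one_le) auto
      also have "\<dots> \<le> inverse (fact j) * x ^ j"
        using b by (auto simp: x_def field_simps intro!: power_mono)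
      finally show ?thesis .
    qed
    then have "(\<Sum>j\<in>{M..<N}. poisson b j * exp (t * j)) \<le> (\<Sum>j\<in>{M..<N}. inverse (fact j) * x ^ j)"
      by (rule sum_mono)
    also have "\<dots> \<le> e" using M[of N] by simp
    finally show ?thesis .
  qed
  then show ?thesis by blast
qed

lemma prob_dist_le_1: "prob_dist p \<Longrightarrow> p j \<le> 1"
  unfolding prob_dist_def using sum_le_suminf[of p "{j}"] by (auto simp: sums_iff)

lemma prob_dist_partial_sum_le_1: "prob_dist p \<Longrightarrow> (\<Sum>j<N. p j) \<le> 1"
  unfolding prob_dist_def using sum_le_suminf[of p "{..<N}"] by (auto simp: sums_iff)

lemma prob_dist_point_mass_0: "prob_dist (\<lambda>j. if j = 0 then 1 else 0)"
  unfolding prob_dist_def using sums_single[of 0 "\<lambda>_. 1 :: real"] by simp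

lemma prob_dist_tail_le_mean_div:
  assumes "prob_dist p" "summable (\<lambda>j. real j * p j)" "0 < M"
  shows "1 - (\<Sum>j<M. p j) \<le> (\<Sum>j. real j * p j) / M"
proof -
  have p: "\<And>j. 0 \<le> p j" "p sums 1" using assms(1) by (auto simp: prob_dist_def)
  have tail: "summable (\<lambda>j. real (j + M) * p (j + M))"
    using assms(2) by (subst summable_iff_shift)
  have "1 - (\<Sum>j<M. p j) = (\<Sum>j. p (j + M))"
    using suminf_split_initial_segment[of p M] p by (auto simp: sums_iff)
  also have "\<dots> \<le> (\<Sum>j. real (j + M) * p (j + M) / M)"
  proof (rule suminf_le)
    show "p (j + M) \<le> real (j + M) * p (j + M) / M" for j
      using assms(3) p(1)[of "j + M"] by (simp add: field_simps mult_right_mono)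
  qed (use p tail in \<open>auto simp: sums_iff intro: summable_divide\<close>)
  also have "\<dots> = (\<Sum>j. real (j + M) * p (j + M)) / M"
    using tail by (rule suminf_divide)
  also have "(\<Sum>j. real (j + M) * p (j + M)) \<le> (\<Sum>j. real j * p j)"
    using suminf_split_initial_segment[OF assms(2), of M] p(1)
    by (simp add: sum_nonneg)
  finally show ?thesis using assms(3) by (simp add: divide_right_mono)
qed

text \<open>Uniform integrability from bounded relative entropy: by \<open>relent_gap_ge\<close> with \<open>g = t * j\<close>,
  the tail of the mean is controlled by \<open>D(p||q)\<close> and an exponential moment of \<open>q\<close>.\<close>
lemma mean_le_partial_mean_plus_relent:
  assumes p: "prob_dist p" "summable (\<lambda>j. real j * p j)"
    and q: "\<And>j. 0 < q j" and gap: "summable (\<lambda>j. relent_gap (p j) (q j))"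
    and t: "0 < t" and tail: "\<And>N. (\<Sum>j\<in>{M..<N}. q j * exp (t * j)) \<le> T"
  shows "(\<Sum>j. real j * p j) \<le> (\<Sum>j<M. real j * p j) + ((\<Sum>j. relent_gap (p j) (q j)) + T) / t"
proof (rule suminf_le_const[OF p(2)])
  fix N
  have p0: "0 \<le> p j" for j using p(1) by (simp add: prob_dist_def)
  define N' where "N' = max M N"
  have "t * (\<Sum>j\<in>{M..<N'}. real j * p j) = (\<Sum>j\<in>{M..<N'}. p j * (t * j))"
    by (simp add: sum_distrib_left algebra_simps)
  also have "\<dots> \<le> (\<Sum>j\<in>{M..<N'}. relent_gap (p j) (q j) + q j * exp (t * j))"
  proof (rule sum_mono)
    fix j
    have "p j * (t * j) \<le> relent_gap (p j) (q j) + q j * (exp (t * j) - 1)"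
      by (rule relent_gap_ge[OF p0 q])
    then show "p j * (t * j) \<le> relent_gap (p j) (q j) + q j * exp (t * j)"
      using q[of j] by (simp add: algebra_simps)
  qed
  also have "\<dots> \<le> (\<Sum>j. relent_gap (p j) (q j)) + T"
    unfolding sum.distrib using tail[of N'] p0 q
    by (intro add_mono sum_le_suminf[OF gap]) (auto intro: relent_gap_nonneg less_imp_le)
  finally have "(\<Sum>j\<in>{M..<N'}. real j * p j) \<le> ((\<Sum>j. relent_gap (p j) (q j)) + T) / t"
    using t by (simp add: field_simps)
  moreover have "(\<Sum>j<N. real j * p j) \<le> (\<Sum>j<N'. real j * p j)"
    using p0 by (intro sum_mono2) (auto simp: N'_def)
  moreover have "(\<Sum>j<N'. real j * p j) = (\<Sum>j<M. real j * p j) + (\<Sum>j\<in>{M..<N'}. real j * p j)"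
    by (metis N'_def atLeast0LessThan max.cobounded1 sum.atLeastLessThan_concat zero_le)
  ultimately show "(\<Sum>j<N. real j * p j) \<le> (\<Sum>j<M. real j * p j) + ((\<Sum>j. relent_gap (p j) (q j)) + T) / t"
    by linarith
qed

section \<open>Admissible plans\<close>

lemma simplexI_bounds:
  assumes "simplexI I g" "k \<le> I + 1"
  shows "0 \<le> g k" "g k \<le> 1"
proof -
  show "0 \<le> g k" using assms by (simp add: simplexI_def)
  have "g k \<le> (\<Sum>j\<le>I+1. g j)"
    using assms by (intro member_le_sum) (auto simp: simplexI_def)
  then show "g k \<le> 1" using assms by (simp add: simplexI_def)
qed

definition active :: "nat \<Rightarrow> (nat \<Rightarrow> real) \<Rightarrow> nat set" where
  "active I \<alpha> = {k. k \<le> I + 1 \<and> 0 < \<alpha> k}"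

definition admissible ::
    "nat \<Rightarrow> (nat \<Rightarrow> real) \<Rightarrow> (nat \<Rightarrow> real) \<Rightarrow> real \<Rightarrow> (nat \<Rightarrow> nat \<Rightarrow> real) \<Rightarrow> bool" where
  "admissible I \<alpha> \<omega> \<beta> \<pi> \<longleftrightarrow>
     (\<forall>k\<in>active I \<alpha>. prob_dist (\<pi> k) \<and> summable (\<lambda>j. real j * \<pi> k j)) \<and>
     (\<Sum>k\<in>active I \<alpha>. \<alpha> k * (\<Sum>j. real j * \<pi> k j)) = \<beta> \<and>
     (\<forall>i\<le>I. \<omega> i = (\<Sum>k\<in>{k\<in>active I \<alpha>. k \<le> i}. \<alpha> k * \<pi> k (i - k)))"

definition plan_cost :: "nat \<Rightarrow> (nat \<Rightarrow> real) \<Rightarrow> real \<Rightarrow> (nat \<Rightarrow> nat \<Rightarrow> real) \<Rightarrow> ereal" where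
  "plan_cost I \<alpha> \<beta> \<pi> = (\<Sum>k\<in>active I \<alpha>. ereal (\<alpha> k) * relent (\<pi> k) (poisson \<beta>))"

lemma Jfun_eq_Inf_plan_cost:
  assumes "feasible I \<alpha> \<omega> \<beta>"
  shows "Jfun I \<alpha> \<omega> \<beta> = Inf {plan_cost I \<alpha> \<beta> \<pi> | \<pi>. admissible I \<alpha> \<omega> \<beta> \<pi>}"
  unfolding Jfun_def Let_def admissible_def plan_cost_def active_def if_P[OF assms] by (rule refl)

lemma sum_active_le:
  assumes "simplexI I \<alpha>" "i \<le> I + 1"
  shows "(\<Sum>k\<in>{k\<in>active I \<alpha>. k \<le> i}. \<alpha> k * f k) = (\<Sum>k\<le>i. \<alpha> k * f k)"
proof (rule sum.mono_neutral_left)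
  show "\<forall>k\<in>{..i} - {k\<in>active I \<alpha>. k \<le> i}. \<alpha> k * f k = 0"
  proof
    fix k assume "k \<in> {..i} - {k\<in>active I \<alpha>. k \<le> i}"
    then have "k \<le> I + 1" "\<not> 0 < \<alpha> k" using assms(2) by (auto simp: active_def)
    then show "\<alpha> k * f k = 0" using simplexI_bounds(1)[OF assms(1)] by force
  qed
qed (auto simp: active_def)

lemma sum_active:
  assumes "simplexI I \<alpha>"
  shows "(\<Sum>k\<in>active I \<alpha>. \<alpha> k * f k) = (\<Sum>k\<le>I+1. \<alpha> k * f k)"
proof -
  have "{k\<in>active I \<alpha>. k \<le> I + 1} = active I \<alpha>" by (auto simp: active_def)
  then show ?thesis using sum_active_le[OF assms, of "I + 1" f] by simp
qed

lemma plan_cost_eq_relent_gap: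
  assumes "\<And>k. k \<in> active I \<alpha> \<Longrightarrow> prob_dist (\<pi> k)"
    and "\<And>k. k \<in> active I \<alpha> \<Longrightarrow> summable (\<lambda>j. relent_gap (\<pi> k j) (poisson \<beta> j))"
  shows "plan_cost I \<alpha> \<beta> \<pi> = ereal (\<Sum>k\<in>active I \<alpha>. \<alpha> k * (\<Sum>j. relent_gap (\<pi> k j) (poisson \<beta> j)))"
  unfolding plan_cost_def sum_ereal[symmetric] times_ereal.simps(1)[symmetric]
  using assms by (intro sum.cong) (auto simp: relent_eq_relent_gap poisson_sums prob_dist_def)

lemma plan_cost_finite_imp_summable:
  assumes "\<And>k. k \<in> active I \<alpha> \<Longrightarrow> prob_dist (\<pi> k)"
    and "plan_cost I \<alpha> \<beta> \<pi> < \<infinity>" "k \<in> active I \<alpha>"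
  shows "summable (\<lambda>j. relent_gap (\<pi> k j) (poisson \<beta> j))"
proof (rule ccontr)
  assume "\<not> ?thesis"
  then have "ereal (\<alpha> k) * relent (\<pi> k) (poisson \<beta>) = \<infinity>"
    using assms by (auto simp: relent_eq_relent_gap poisson_sums prob_dist_def active_def)
  then have "plan_cost I \<alpha> \<beta> \<pi> = \<infinity>"
    unfolding plan_cost_def using assms(3) by (subst sum_Pinfty) (auto simp: active_def)
  with assms(2) show False by simp
qed

section \<open>Limits of admissible plans\<close>

lemma diagonal_subseq_pointwise_convergent:
  fixes f :: "nat \<Rightarrow> 'i::countable \<Rightarrow> 'a::heine_borel"
  assumes "\<And>i. bounded (range (\<lambda>n. f n i))"
  shows "\<exists>d. strict_mono d \<and> (\<forall>i. convergent (\<lambda>n. f (d n) i))"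
proof -
  define P where "P m s \<longleftrightarrow> convergent (\<lambda>n. f (s n) (from_nat m))" for m and s :: "nat \<Rightarrow> nat"
  interpret subseqs P
  proof
    fix m and s :: "nat \<Rightarrow> nat"
    have "bounded (range (\<lambda>n. f (s n) (from_nat m)))"
      using assms by (rule bounded_subset) auto
    then obtain l r where "strict_mono r" "((\<lambda>n. f (s n) (from_nat m)) \<circ> r) \<longlonglongrightarrow> l"
      using bounded_imp_convergent_subsequence by blast
    then show "\<exists>r. strict_mono r \<and> P m (s \<circ> r)"
      by (auto simp: P_def convergent_def comp_def)
  qed
  have "P m diagseq" for m
  proof -
    have "P m (diagseq \<circ> (+) (Suc m))"
    proof (rule diagseq_holds)
      fix r s :: "nat \<Rightarrow> nat" and n assume "strict_mono r" "P n s"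
      then show "P n (s \<circ> r)"
        unfolding P_def using convergent_subseq_convergent by (auto simp: comp_def)
    qed
    then obtain l where "(\<lambda>n. f (diagseq (n + Suc m)) (from_nat m)) \<longlonglongrightarrow> l"
      unfolding P_def convergent_def comp_def by (auto simp: add.commute)
    then show ?thesis
      unfolding P_def convergent_def by (blast intro: LIMSEQ_offset)
  qed
  then show ?thesis
    using subseq_diagseq by (metis P_def from_nat_to_nat)
qed

locale plan_limit =
  fixes I :: nat
    and \<alpha>s \<omega>s :: "nat \<Rightarrow> nat \<Rightarrow> real" and \<beta>s :: "nat \<Rightarrow> real"
    and \<alpha> \<omega> :: "nat \<Rightarrow> real" and \<beta> L :: real
    and \<pi>s :: "nat \<Rightarrow> nat \<Rightarrow> nat \<Rightarrow> real" and \<pi> :: "nat \<Rightarrow> nat \<Rightarrow> real"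
  assumes feasible_seq: "\<And>n. feasible I (\<alpha>s n) (\<omega>s n) (\<beta>s n)"
    and feasible: "feasible I \<alpha> \<omega> \<beta>"
    and \<alpha>s_tendsto: "\<And>k. k \<le> I + 1 \<Longrightarrow> (\<lambda>n. \<alpha>s n k) \<longlonglongrightarrow> \<alpha> k"
    and \<omega>s_tendsto: "\<And>i. i \<le> I + 1 \<Longrightarrow> (\<lambda>n. \<omega>s n i) \<longlonglongrightarrow> \<omega> i"
    and \<beta>s_tendsto: "\<beta>s \<longlonglongrightarrow> \<beta>"
    and \<pi>s_prob_dist: "\<And>n k. prob_dist (\<pi>s n k)"
    and \<pi>s_admissible: "\<And>n. admissible I (\<alpha>s n) (\<omega>s n) (\<beta>s n) (\<pi>s n)"
    and \<pi>s_cost: "\<And>n. plan_cost I (\<alpha>s n) (\<beta>s n) (\<pi>s n) < ereal L"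
    and \<pi>s_tendsto: "\<And>k j. (\<lambda>n. \<pi>s n k j) \<longlonglongrightarrow> \<pi> k j"
begin

lemma simplex_seq: "simplexI I (\<alpha>s n)" and simplex: "simplexI I \<alpha>"
  and \<beta>s_pos: "0 < \<beta>s n" and \<beta>_pos: "0 < \<beta>"
  using feasible_seq[of n] feasible by (auto simp: feasible_def)

lemma \<alpha>s_nonneg: "k \<le> I + 1 \<Longrightarrow> 0 \<le> \<alpha>s n k"
  and \<alpha>_nonneg: "k \<le> I + 1 \<Longrightarrow> 0 \<le> \<alpha> k"
  using simplexI_bounds(1) simplex_seq simplex by blast+

lemma \<pi>s_nonneg: "0 \<le> \<pi>s n k j"
  using \<pi>s_prob_dist by (simp add: prob_dist_def)

lemma \<pi>_nonneg: "0 \<le> \<pi> k j"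
  by (rule LIMSEQ_le_const[OF \<pi>s_tendsto]) (simp add: \<pi>s_nonneg)

lemma \<pi>s_mean_summable: "k \<in> active I (\<alpha>s n) \<Longrightarrow> summable (\<lambda>j. real j * \<pi>s n k j)"
  using \<pi>s_admissible[of n] by (simp add: admissible_def)

lemma eventually_active_subset: "eventually (\<lambda>n. active I \<alpha> \<subseteq> active I (\<alpha>s n)) sequentially"
proof -
  have "eventually (\<lambda>n. \<forall>k\<in>active I \<alpha>. 0 < \<alpha>s n k) sequentially"
    by (intro eventually_ball_finite ballI order_tendstoD(1)[OF \<alpha>s_tendsto])
       (auto simp: active_def)
  then show ?thesis by eventually_elim (auto simp: active_def)
qed

lemma \<omega>_eq: "i \<le> I \<Longrightarrow> \<omega> i = (\<Sum>k\<in>{k\<in>active I \<alpha>. k \<le> i}. \<alpha> k * \<pi> k (i - k))"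
proof -
  assume i: "i \<le> I"
  have "\<omega>s n i = (\<Sum>k\<le>i. \<alpha>s n k * \<pi>s n k (i - k))" for n
    using \<pi>s_admissible[of n] i sum_active_le[OF simplex_seq, of i n] by (simp add: admissible_def)
  moreover have "(\<lambda>n. \<Sum>k\<le>i. \<alpha>s n k * \<pi>s n k (i - k)) \<longlonglongrightarrow> (\<Sum>k\<le>i. \<alpha> k * \<pi> k (i - k))"
    using i by (intro tendsto_intros \<alpha>s_tendsto \<pi>s_tendsto) auto
  ultimately have "\<omega> i = (\<Sum>k\<le>i. \<alpha> k * \<pi> k (i - k))"
    using LIMSEQ_unique \<omega>s_tendsto[of i] i by force
  also have "\<dots> = (\<Sum>k\<in>{k\<in>active I \<alpha>. k \<le> i}. \<alpha> k * \<pi> k (i - k))"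
    using sum_active_le[OF simplex, of i] i by simp
  finally show ?thesis .
qed

lemma weighted_mean_seq: "(\<Sum>k\<in>active I (\<alpha>s n). \<alpha>s n k * (\<Sum>j. real j * \<pi>s n k j)) = \<beta>s n"
  using \<pi>s_admissible[of n] by (simp add: admissible_def)

lemma weighted_partial_mean_seq_le:
  "(\<Sum>k\<le>I+1. \<alpha>s n k * (\<Sum>j<M. real j * \<pi>s n k j)) \<le> \<beta>s n"
proof -
  have "(\<Sum>k\<in>active I (\<alpha>s n). \<alpha>s n k * (\<Sum>j<M. real j * \<pi>s n k j))
      \<le> (\<Sum>k\<in>active I (\<alpha>s n). \<alpha>s n k * (\<Sum>j. real j * \<pi>s n k j))"
    using \<pi>s_mean_summable \<pi>s_nonneg
    by (intro sum_mono mult_left_mono sum_le_suminf) (auto simp: active_def)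
  then show ?thesis unfolding weighted_mean_seq sum_active[OF simplex_seq] .
qed

lemma weighted_mean_seq_term_le: "k \<in> active I (\<alpha>s n) \<Longrightarrow> \<alpha>s n k * (\<Sum>j. real j * \<pi>s n k j) \<le> \<beta>s n"
  unfolding weighted_mean_seq[of n, symmetric] using \<pi>s_mean_summable \<pi>s_nonneg
  by (intro member_le_sum mult_nonneg_nonneg suminf_nonneg) (auto simp: active_def)

lemma \<pi>_tail_mass_le:
  assumes kI: "k \<le> I + 1" and M: "0 < M"
  shows "\<alpha> k * (1 - (\<Sum>j<M. \<pi> k j)) \<le> \<beta> / M"
proof -
  have "\<alpha>s n k * (1 - (\<Sum>j<M. \<pi>s n k j)) \<le> \<beta>s n / M" for n
  proof (cases "k \<in> active I (\<alpha>s n)")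
    case True
    have "\<alpha>s n k * (1 - (\<Sum>j<M. \<pi>s n k j)) \<le> \<alpha>s n k * ((\<Sum>j. real j * \<pi>s n k j) / M)"
      using prob_dist_tail_le_mean_div[OF \<pi>s_prob_dist \<pi>s_mean_summable[OF True] M] \<alpha>s_nonneg[OF kI]
      by (rule mult_left_mono)
    also have "\<dots> \<le> \<beta>s n / M"
      using weighted_mean_seq_term_le[OF True] M by (simp add: divide_right_mono)
    finally show ?thesis .
  next
    case False
    then have "\<alpha>s n k = 0" using kI \<alpha>s_nonneg[OF kI, of n] by (auto simp: active_def)
    then show ?thesis using \<beta>s_pos[of n] by simp
  qed
  moreover have "(\<lambda>n. \<alpha>s n k * (1 - (\<Sum>j<M. \<pi>s n k j))) \<longlonglongrightarrow> \<alpha> k * (1 - (\<Sum>j<M. \<pi> k j))"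
    by (intro tendsto_intros \<alpha>s_tendsto kI \<pi>s_tendsto)
  moreover have "(\<lambda>n. \<beta>s n / M) \<longlonglongrightarrow> \<beta> / M"
    using M by (intro tendsto_intros \<beta>s_tendsto) simp
  ultimately show ?thesis by (intro LIMSEQ_le) auto
qed

lemma \<pi>_prob_dist: "k \<in> active I \<alpha> \<Longrightarrow> prob_dist (\<pi> k)"
proof -
  assume k: "k \<in> active I \<alpha>"
  then have kI: "k \<le> I + 1" and \<alpha>k: "0 < \<alpha> k" by (auto simp: active_def)
  have upper: "(\<Sum>j<M. \<pi> k j) \<le> 1" for M
    by (rule LIMSEQ_le_const2[OF tendsto_sum[OF \<pi>s_tendsto]])
       (simp add: prob_dist_partial_sum_le_1 \<pi>s_prob_dist)
  have lower: "1 - \<beta> / \<alpha> k / M \<le> (\<Sum>j<M. \<pi> k j)" if M: "0 < M" for M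
    using \<pi>_tail_mass_le[OF kI M] \<alpha>k M by (simp add: field_simps)
  have "(\<lambda>M. \<Sum>j<M. \<pi> k j) \<longlonglongrightarrow> 1"
  proof (rule real_tendsto_sandwich)
    show "eventually (\<lambda>M. 1 - \<beta> / \<alpha> k / real M \<le> (\<Sum>j<M. \<pi> k j)) sequentially"
      using eventually_gt_at_top[of 0] by eventually_elim (rule lower)
    have "(\<lambda>M. 1 - \<beta> / \<alpha> k / real M) \<longlonglongrightarrow> 1 - 0"
      by (intro tendsto_intros lim_const_over_n)
    then show "(\<lambda>M. 1 - \<beta> / \<alpha> k / real M) \<longlonglongrightarrow> 1" by simp
  qed (use upper in auto)
  then show ?thesis by (simp add: prob_dist_def sums_def \<pi>_nonneg)
qed

lemma weighted_partial_mean_le: "(\<Sum>k\<le>I+1. \<alpha> k * (\<Sum>j<M. real j * \<pi> k j)) \<le> \<beta>"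
proof (rule LIMSEQ_le[OF _ \<beta>s_tendsto])
  show "(\<lambda>n. \<Sum>k\<le>I+1. \<alpha>s n k * (\<Sum>j<M. real j * \<pi>s n k j))
      \<longlonglongrightarrow> (\<Sum>k\<le>I+1. \<alpha> k * (\<Sum>j<M. real j * \<pi> k j))"
    by (intro tendsto_intros \<alpha>s_tendsto \<pi>s_tendsto) auto
qed (use weighted_partial_mean_seq_le in blast)

lemma \<pi>_mean_summable: "k \<in> active I \<alpha> \<Longrightarrow> summable (\<lambda>j. real j * \<pi> k j)"
proof (rule summableI_nonneg_bounded)
  fix M assume k: "k \<in> active I \<alpha>"
  have "\<alpha> k * (\<Sum>j<M. real j * \<pi> k j) \<le> (\<Sum>k\<le>I+1. \<alpha> k * (\<Sum>j<M. real j * \<pi> k j))"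
    using k \<alpha>_nonneg \<pi>_nonneg
    by (intro member_le_sum) (auto simp: active_def intro!: mult_nonneg_nonneg sum_nonneg)
  then show "(\<Sum>j<M. real j * \<pi> k j) \<le> \<beta> / \<alpha> k"
    using weighted_partial_mean_le[of M] k by (simp add: active_def field_simps)
qed (simp add: \<pi>_nonneg)

lemma weighted_mean_le: "(\<Sum>k\<in>active I \<alpha>. \<alpha> k * (\<Sum>j. real j * \<pi> k j)) \<le> \<beta>"
proof (rule LIMSEQ_le_const2)
  show "(\<lambda>M. \<Sum>k\<in>active I \<alpha>. \<alpha> k * (\<Sum>j<M. real j * \<pi> k j))
      \<longlonglongrightarrow> (\<Sum>k\<in>active I \<alpha>. \<alpha> k * (\<Sum>j. real j * \<pi> k j))"
    by (intro tendsto_intros summable_LIMSEQ \<pi>_mean_summable)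
  show "\<exists>N. \<forall>M\<ge>N. (\<Sum>k\<in>active I \<alpha>. \<alpha> k * (\<Sum>j<M. real j * \<pi> k j)) \<le> \<beta>"
    using weighted_partial_mean_le by (simp add: sum_active[OF simplex])
qed

lemma relent_gap_seq_summable:
  "k \<in> active I (\<alpha>s n) \<Longrightarrow> summable (\<lambda>j. relent_gap (\<pi>s n k j) (poisson (\<beta>s n) j))"
  using \<pi>s_cost[of n] by (intro plan_cost_finite_imp_summable \<pi>s_prob_dist) auto

lemma weighted_relent_gap_seq_less:
  "(\<Sum>k\<in>active I (\<alpha>s n). \<alpha>s n k * (\<Sum>j. relent_gap (\<pi>s n k j) (poisson (\<beta>s n) j))) < L"
  using \<pi>s_cost[of n] plan_cost_eq_relent_gap[OF \<pi>s_prob_dist relent_gap_seq_summable] by simp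

lemma weighted_relent_gap_seq_nonneg:
  "0 \<le> (\<Sum>k\<in>active I (\<alpha>s n). \<alpha>s n k * (\<Sum>j. relent_gap (\<pi>s n k j) (poisson (\<beta>s n) j)))"
  using relent_gap_seq_summable \<pi>s_nonneg poisson_pos[OF \<beta>s_pos]
  by (intro sum_nonneg mult_nonneg_nonneg suminf_nonneg relent_gap_nonneg) (auto simp: active_def)

lemma L_pos: "0 < L"
  using weighted_relent_gap_seq_nonneg[of 0] weighted_relent_gap_seq_less[of 0] by linarith

text \<open>Entropy at most \<open>L\<close> makes \<open>j\<close> uniformly integrable under the \<open>\<pi>s n k\<close>, so the mean cannot
  escape to infinity.\<close>
lemma weighted_mean_seq_le_partial:
  assumes t: "0 < t" and tail: "\<And>N. (\<Sum>j\<in>{M..<N}. poisson (\<beta>s n) j * exp (t * j)) \<le> 1"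
  shows "\<beta>s n \<le> (\<Sum>k\<le>I+1. \<alpha>s n k * (\<Sum>j<M. real j * \<pi>s n k j)) + (L + 1) / t"
proof -
  define D where "D k = (\<Sum>j. relent_gap (\<pi>s n k j) (poisson (\<beta>s n) j))" for k
  define Kn where "Kn = active I (\<alpha>s n)"
  have "\<alpha>s n k * (\<Sum>j. real j * \<pi>s n k j)
      \<le> \<alpha>s n k * (\<Sum>j<M. real j * \<pi>s n k j) + (\<alpha>s n k * D k + \<alpha>s n k) / t" if k: "k \<in> Kn" for k
  proof -
    have "(\<Sum>j. real j * \<pi>s n k j) \<le> (\<Sum>j<M. real j * \<pi>s n k j) + (D k + 1) / t"
      unfolding D_def using k \<beta>s_pos[of n] unfolding Kn_def
      by (intro mean_le_partial_mean_plus_relent \<pi>s_prob_dist \<pi>s_mean_summable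
          poisson_pos relent_gap_seq_summable t tail)
    then show ?thesis
      using \<alpha>s_nonneg[of k n] k by (auto simp: Kn_def active_def add_divide_distrib distrib_left
          dest: mult_left_mono[of _ _ "\<alpha>s n k"])
  qed
  then have "\<beta>s n \<le> (\<Sum>k\<in>Kn. \<alpha>s n k * (\<Sum>j<M. real j * \<pi>s n k j) + (\<alpha>s n k * D k + \<alpha>s n k) / t)"
    unfolding weighted_mean_seq[of n, symmetric] Kn_def by (intro sum_mono) simp
  also have "\<dots> = (\<Sum>k\<in>Kn. \<alpha>s n k * (\<Sum>j<M. real j * \<pi>s n k j))
                  + ((\<Sum>k\<in>Kn. \<alpha>s n k * D k) + (\<Sum>k\<in>Kn. \<alpha>s n k)) / t"
    by (simp add: sum.distrib sum_divide_distrib[symmetric])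
  also have "\<dots> \<le> (\<Sum>k\<le>I+1. \<alpha>s n k * (\<Sum>j<M. real j * \<pi>s n k j)) + (L + 1) / t"
  proof -
    have "(\<Sum>k\<in>Kn. \<alpha>s n k * (\<Sum>j<M. real j * \<pi>s n k j))
        = (\<Sum>k\<le>I+1. \<alpha>s n k * (\<Sum>j<M. real j * \<pi>s n k j))"
      unfolding Kn_def by (rule sum_active[OF simplex_seq])
    moreover have "(\<Sum>k\<in>Kn. \<alpha>s n k) = 1"
      using sum_active[OF simplex_seq, of n "\<lambda>_. 1"] simplex_seq[of n]
      by (simp add: Kn_def simplexI_def)
    moreover have "(\<Sum>k\<in>Kn. \<alpha>s n k * D k) \<le> L"
      using weighted_relent_gap_seq_less[of n] by (simp add: Kn_def D_def)
    ultimately show ?thesis using t by (simp add: divide_right_mono)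
  qed
  finally show ?thesis .
qed

lemma weighted_mean_ge: "\<beta> \<le> (\<Sum>k\<in>active I \<alpha>. \<alpha> k * (\<Sum>j. real j * \<pi> k j))"
  (is "_ \<le> ?S")
proof -
  have approx: "\<beta> \<le> ?S + (L + 1) / t" if t: "0 < t" for t
  proof -
    obtain M where M: "\<And>b N. 0 < b \<Longrightarrow> b \<le> 2 * \<beta> \<Longrightarrow> (\<Sum>j\<in>{M..<N}. poisson b j * exp (t * j)) \<le> 1"
      using poisson_exp_moment_tail_uniform[of 1 "2 * \<beta>" t] by auto
    have "eventually (\<lambda>n. \<beta>s n < 2 * \<beta>) sequentially"
      using \<beta>_pos by (intro order_tendstoD(2)[OF \<beta>s_tendsto]) simp
    then have ev: "eventually (\<lambda>n. \<beta>s n \<le> (\<Sum>k\<le>I+1. \<alpha>s n k * (\<Sum>j<M. real j * \<pi>s n k j)) + (L + 1) / t) sequentially"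
      by eventually_elim (rule weighted_mean_seq_le_partial[OF t M]; simp add: \<beta>s_pos)
    have lim: "(\<lambda>n. (\<Sum>k\<le>I+1. \<alpha>s n k * (\<Sum>j<M. real j * \<pi>s n k j)) + (L + 1) / t)
        \<longlonglongrightarrow> (\<Sum>k\<le>I+1. \<alpha> k * (\<Sum>j<M. real j * \<pi> k j)) + (L + 1) / t"
      by (intro tendsto_intros \<alpha>s_tendsto \<pi>s_tendsto) auto
    have "\<beta> \<le> (\<Sum>k\<le>I+1. \<alpha> k * (\<Sum>j<M. real j * \<pi> k j)) + (L + 1) / t"
      by (rule tendsto_le[OF sequentially_bot lim \<beta>s_tendsto ev])
    moreover have "(\<Sum>k\<le>I+1. \<alpha> k * (\<Sum>j<M. real j * \<pi> k j)) \<le> ?S"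
      unfolding sum_active[OF simplex, symmetric]
    proof (intro sum_mono mult_left_mono)
      fix k assume k: "k \<in> active I \<alpha>"
      show "(\<Sum>j<M. real j * \<pi> k j) \<le> (\<Sum>j. real j * \<pi> k j)"
        by (rule sum_le_suminf[OF \<pi>_mean_summable[OF k]]) (simp_all add: \<pi>_nonneg)
      show "0 \<le> \<alpha> k" using k by (simp add: active_def)
    qed
    ultimately show ?thesis by linarith
  qed
  show ?thesis
  proof (rule field_le_epsilon)
    fix e :: real assume "0 < e"
    then have "0 < (L + 1) / e" using L_pos by simp
    from approx[OF this] show "\<beta> \<le> ?S + e"
      using \<open>0 < e\<close> L_pos by simp
  qed
qed

lemma weighted_partial_relent_gap_le:
  "(\<Sum>k\<in>active I \<alpha>. \<alpha> k * (\<Sum>j<M. relent_gap (\<pi> k j) (poisson \<beta> j))) \<le> L"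
proof (rule tendsto_upperbound)
  show "(\<lambda>n. \<Sum>k\<in>active I \<alpha>. \<alpha>s n k * (\<Sum>j<M. relent_gap (\<pi>s n k j) (poisson (\<beta>s n) j)))
      \<longlonglongrightarrow> (\<Sum>k\<in>active I \<alpha>. \<alpha> k * (\<Sum>j<M. relent_gap (\<pi> k j) (poisson \<beta> j)))"
    unfolding relent_gap_def
    by (intro tendsto_intros tendsto_relent_term \<alpha>s_tendsto \<pi>s_tendsto tendsto_poisson \<beta>s_tendsto
        \<pi>s_nonneg poisson_pos \<beta>_pos) (auto simp: active_def)
  show "eventually (\<lambda>n. (\<Sum>k\<in>active I \<alpha>. \<alpha>s n k * (\<Sum>j<M. relent_gap (\<pi>s n k j) (poisson (\<beta>s n) j)))
      \<le> L) sequentially"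
    using eventually_active_subset
  proof eventually_elim
    case (elim n)
    define D where "D k = (\<Sum>j. relent_gap (\<pi>s n k j) (poisson (\<beta>s n) j))" for k
    have D_nonneg: "0 \<le> \<alpha>s n k * D k" if "k \<in> active I (\<alpha>s n)" for k
      using that relent_gap_seq_summable \<pi>s_nonneg poisson_pos[OF \<beta>s_pos] unfolding D_def
      by (intro mult_nonneg_nonneg suminf_nonneg relent_gap_nonneg) (auto simp: active_def)
    have "(\<Sum>k\<in>active I \<alpha>. \<alpha>s n k * (\<Sum>j<M. relent_gap (\<pi>s n k j) (poisson (\<beta>s n) j)))
        \<le> (\<Sum>k\<in>active I \<alpha>. \<alpha>s n k * D k)"
    proof (intro sum_mono mult_left_mono)
      fix k assume "k \<in> active I \<alpha>"
      with elim have k: "k \<in> active I (\<alpha>s n)" by auto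
      show "(\<Sum>j<M. relent_gap (\<pi>s n k j) (poisson (\<beta>s n) j)) \<le> D k"
        unfolding D_def by (rule sum_le_suminf[OF relent_gap_seq_summable[OF k]])
          (simp_all add: relent_gap_nonneg \<pi>s_nonneg poisson_pos \<beta>s_pos)
      show "0 \<le> \<alpha>s n k" using k by (simp add: active_def)
    qed
    also have "\<dots> \<le> (\<Sum>k\<in>active I (\<alpha>s n). \<alpha>s n k * D k)"
      using elim D_nonneg by (intro sum_mono2) (auto simp: active_def)
    also have "\<dots> \<le> L"
      using weighted_relent_gap_seq_less[of n] by (simp add: D_def)
    finally show ?case .
  qed
qed simp

lemma \<pi>_relent_gap_summable:
  "k \<in> active I \<alpha> \<Longrightarrow> summable (\<lambda>j. relent_gap (\<pi> k j) (poisson \<beta> j))"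
proof (rule summableI_nonneg_bounded)
  fix M assume k: "k \<in> active I \<alpha>"
  have gap_nonneg: "0 \<le> relent_gap (\<pi> k j) (poisson \<beta> j)" for k j
    by (simp add: relent_gap_nonneg \<pi>_nonneg poisson_pos \<beta>_pos)
  have "\<alpha> k * (\<Sum>j<M. relent_gap (\<pi> k j) (poisson \<beta> j))
      \<le> (\<Sum>k\<in>active I \<alpha>. \<alpha> k * (\<Sum>j<M. relent_gap (\<pi> k j) (poisson \<beta> j)))"
    using k gap_nonneg
    by (intro member_le_sum) (auto simp: active_def intro!: mult_nonneg_nonneg sum_nonneg)
  then show "(\<Sum>j<M. relent_gap (\<pi> k j) (poisson \<beta> j)) \<le> L / \<alpha> k"
    using weighted_partial_relent_gap_le[of M] k by (simp add: active_def field_simps)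
qed (simp add: relent_gap_nonneg \<pi>_nonneg poisson_pos \<beta>_pos)

lemma plan_cost_le: "plan_cost I \<alpha> \<beta> \<pi> \<le> ereal L"
proof -
  have "(\<Sum>k\<in>active I \<alpha>. \<alpha> k * (\<Sum>j. relent_gap (\<pi> k j) (poisson \<beta> j))) \<le> L"
  proof (rule LIMSEQ_le_const2)
    show "(\<lambda>M. \<Sum>k\<in>active I \<alpha>. \<alpha> k * (\<Sum>j<M. relent_gap (\<pi> k j) (poisson \<beta> j)))
        \<longlonglongrightarrow> (\<Sum>k\<in>active I \<alpha>. \<alpha> k * (\<Sum>j. relent_gap (\<pi> k j) (poisson \<beta> j)))"
      by (intro tendsto_intros summable_LIMSEQ \<pi>_relent_gap_summable)
  qed (use weighted_partial_relent_gap_le in blast)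
  then show ?thesis
    by (simp add: plan_cost_eq_relent_gap \<pi>_prob_dist \<pi>_relent_gap_summable)
qed

lemma \<pi>_admissible: "admissible I \<alpha> \<omega> \<beta> \<pi>"
  unfolding admissible_def
  using \<pi>_prob_dist \<pi>_mean_summable weighted_mean_le weighted_mean_ge \<omega>_eq by auto

lemma Jfun_le: "Jfun I \<alpha> \<omega> \<beta> \<le> ereal L"
proof -
  have "Jfun I \<alpha> \<omega> \<beta> \<le> plan_cost I \<alpha> \<beta> \<pi>"
    unfolding Jfun_eq_Inf_plan_cost[OF feasible] using \<pi>_admissible by (blast intro: Inf_lower)
  also have "\<dots> \<le> ereal L" by (rule plan_cost_le)
  finally show ?thesis .
qed

end

text \<open>Components of a plan outside \<open>active I \<alpha>\<close> are irrelevant; replacing them by a point mass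
  makes every component a probability distribution.\<close>
lemma near_optimal_plan:
  assumes "feasible I \<alpha> \<omega> \<beta>" "Jfun I \<alpha> \<omega> \<beta> < ereal L"
  obtains \<pi> where "\<And>k. prob_dist (\<pi> k)" "admissible I \<alpha> \<omega> \<beta> \<pi>" "plan_cost I \<alpha> \<beta> \<pi> < ereal L"
proof -
  obtain \<pi> where \<pi>: "admissible I \<alpha> \<omega> \<beta> \<pi>" "plan_cost I \<alpha> \<beta> \<pi> < ereal L"
    using assms unfolding Jfun_eq_Inf_plan_cost[OF assms(1)] Inf_less_iff by blast
  define \<pi>' where "\<pi>' k = (if k \<in> active I \<alpha> then \<pi> k else (\<lambda>j. if j = 0 then 1 else 0))" for k
  have "admissible I \<alpha> \<omega> \<beta> \<pi>'" "plan_cost I \<alpha> \<beta> \<pi>' = plan_cost I \<alpha> \<beta> \<pi>"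
    using \<pi>(1) by (auto simp: \<pi>'_def admissible_def plan_cost_def intro!: sum.cong)
  moreover have "prob_dist (\<pi>' k)" for k
    using \<pi>(1) prob_dist_point_mass_0 by (auto simp: \<pi>'_def admissible_def)
  ultimately show ?thesis using that[of \<pi>'] \<pi>(2) by simp
qed

lemma Jfun_le_if_frequently_less:
  fixes \<alpha>s \<omega>s :: "nat \<Rightarrow> nat \<Rightarrow> real" and \<beta>s :: "nat \<Rightarrow> real"
  assumes feasible_seq: "\<And>n. feasible I (\<alpha>s n) (\<omega>s n) (\<beta>s n)"
    and feasible: "feasible I \<alpha> \<omega> \<beta>"
    and \<alpha>s_tendsto: "\<And>k. k \<le> I + 1 \<Longrightarrow> (\<lambda>n. \<alpha>s n k) \<longlonglongrightarrow> \<alpha> k"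
    and \<omega>s_tendsto: "\<And>i. i \<le> I + 1 \<Longrightarrow> (\<lambda>n. \<omega>s n i) \<longlonglongrightarrow> \<omega> i"
    and \<beta>s_tendsto: "\<beta>s \<longlonglongrightarrow> \<beta>"
    and less: "frequently (\<lambda>n. Jfun I (\<alpha>s n) (\<omega>s n) (\<beta>s n) < ereal L) sequentially"
  shows "Jfun I \<alpha> \<omega> \<beta> \<le> ereal L"
proof -
  obtain r :: "nat \<Rightarrow> nat" where r: "strict_mono r" "\<And>n. Jfun I (\<alpha>s (r n)) (\<omega>s (r n)) (\<beta>s (r n)) < ereal L"
    using less infinite_enumerate
    by (metis (mono_tags, lifting) cofinite_eq_sequentially frequently_cofinite mem_Collect_eq)
  have "\<exists>\<pi>. (\<forall>k. prob_dist (\<pi> k)) \<and> admissible I (\<alpha>s (r n)) (\<omega>s (r n)) (\<beta>s (r n)) \<pi>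
          \<and> plan_cost I (\<alpha>s (r n)) (\<beta>s (r n)) \<pi> < ereal L" for n
    using near_optimal_plan[OF feasible_seq r(2)[of n]] by blast
  then obtain \<pi>s where \<pi>s: "\<And>n k. prob_dist (\<pi>s n k)"
      "\<And>n. admissible I (\<alpha>s (r n)) (\<omega>s (r n)) (\<beta>s (r n)) (\<pi>s n)"
      "\<And>n. plan_cost I (\<alpha>s (r n)) (\<beta>s (r n)) (\<pi>s n) < ereal L"
    by metis
  have "bounded (range (\<lambda>n. \<pi>s n k j))" for k j
    using \<pi>s(1) prob_dist_le_1 by (intro boundedI[of _ 1]) (auto simp: prob_dist_def)
  then obtain d where d: "strict_mono d" "\<And>k j. convergent (\<lambda>n. \<pi>s (d n) k j)"
    using diagonal_subseq_pointwise_convergent[of "\<lambda>n (k, j). \<pi>s n k j"] by auto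
  have subseq: "(\<lambda>n. X (r (d n))) \<longlonglongrightarrow> x" if "X \<longlonglongrightarrow> x" for X :: "nat \<Rightarrow> real" and x
    using LIMSEQ_subseq_LIMSEQ[OF that strict_mono_o[OF r(1) d(1)]] by (simp add: comp_def)
  interpret plan_limit I "\<lambda>n. \<alpha>s (r (d n))" "\<lambda>n. \<omega>s (r (d n))" "\<lambda>n. \<beta>s (r (d n))" \<alpha> \<omega> \<beta> L
      "\<lambda>n. \<pi>s (d n)" "\<lambda>k j. lim (\<lambda>n. \<pi>s (d n) k j)"
    using feasible_seq feasible \<alpha>s_tendsto \<omega>s_tendsto \<beta>s_tendsto \<pi>s d(2)
    by unfold_locales (auto intro: subseq simp: convergent_LIMSEQ_iff)
  show ?thesis by (rule Jfun_le)
qed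

theorem corollaryA7:
  fixes I :: nat
    and \<alpha>s \<omega>s :: "nat \<Rightarrow> nat \<Rightarrow> real" and \<beta>s :: "nat \<Rightarrow> real"
    and \<alpha> \<omega> :: "nat \<Rightarrow> real" and \<beta> :: real
  assumes "\<And>n. feasible I (\<alpha>s n) (\<omega>s n) (\<beta>s n)"
    and "feasible I \<alpha> \<omega> \<beta>"
    and "\<And>j. j \<le> I + 1 \<Longrightarrow> (\<lambda>n. \<alpha>s n j) \<longlonglongrightarrow> \<alpha> j"
    and "\<And>j. j \<le> I + 1 \<Longrightarrow> (\<lambda>n. \<omega>s n j) \<longlonglongrightarrow> \<omega> j"
    and "\<beta>s \<longlonglongrightarrow> \<beta>"
    and "0 < \<beta>"
  shows "Liminf sequentially (\<lambda>n. Jfun I (\<alpha>s n) (\<omega>s n) (\<beta>s n)) \<ge> Jfun I \<alpha> \<omega> \<beta>"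
  unfolding le_Liminf_iff
proof (intro allI impI)
  fix y assume "y < Jfun I \<alpha> \<omega> \<beta>"
  then obtain L where L: "y < ereal L" "ereal L < Jfun I \<alpha> \<omega> \<beta>"
    using ereal_dense2 by blast
  show "eventually (\<lambda>n. y < Jfun I (\<alpha>s n) (\<omega>s n) (\<beta>s n)) sequentially"
  proof (rule ccontr)
    assume "\<not> ?thesis"
    then have "frequently (\<lambda>n. Jfun I (\<alpha>s n) (\<omega>s n) (\<beta>s n) < ereal L) sequentially"
      unfolding not_eventually by (rule frequently_elim1) (use L(1) in auto)
    with assms(1-5) have "Jfun I \<alpha> \<omega> \<beta> \<le> ereal L"
      by (rule Jfun_le_if_frequently_less)
    with L(2) show False by simp
  qed
qed

end
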